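(* If the triples $(p,q,r)$ and $(p',q',r')$ are dual to each other in the extended strange duality, then the matrix $A_{p,q,r}$ is conjugate in $SL(2;\mathbb Z)$ to the inverse $A_{p',q',r'}^{-1}$.
   Context: For positive integers $p,q,r$ let $A_{p,q,r}=\begin{pmatrix}r-1&-1\\1&0\end{pmatrix}\begin{pmatrix}q-1&-1\\1&0\end{pmatrix}\begin{pmatrix}p-1&-1\\1&0\end{pmatrix}$ (the monodromy of the link of the cusp singularity $x^p+y^q+z^r+axyz$, a $T^2$-bundle over the circle). The extended strange duality pairs of triples are: the self-dual triples $(2,3,7)$, $(2,4,6)$, $(3,3,6)$, $(2,5,5)$, $(3,4,5)$, $(4,4,4)$, and the pairs $(2,3,8)\leftrightarrow(2,4,5)$, $(2,3,9)\leftrightarrow(3,3,4)$, $(2,4,7)\leftrightarrow(3,3,5)$, $(2,5,6)\leftrightarrow(3,4,4)$. *)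

theory Defs
  imports "HOL-Analysis.Analysis"
begin

definition cusp_factor :: "int \<Rightarrow> int^2^2" where
  "cusp_factor n = vector [vector [n - 1, -1], vector [1, 0]]"

definition A_mat :: "nat \<Rightarrow> nat \<Rightarrow> nat \<Rightarrow> int^2^2" where
  "A_mat p q r = cusp_factor (int r) ** cusp_factor (int q) ** cusp_factor (int p)"

definition SL2Z_conjugate :: "int^2^2 \<Rightarrow> int^2^2 \<Rightarrow> bool" where
  "SL2Z_conjugate A B \<longleftrightarrow> (\<exists>P :: int^2^2. det P = 1 \<and> P ** A ** matrix_inv P = B)"

definition strange_dual_pairs :: "((nat \<times> nat \<times> nat) \<times> (nat \<times> nat \<times> nat)) set" where
  "strange_dual_pairs =
     {((2,3,7),(2,3,7)), ((2,4,6),(2,4,6)), ((3,3,6),(3,3,6)), ((2,5,5),(2,5,5)),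
      ((3,4,5),(3,4,5)), ((4,4,4),(4,4,4)),
      ((2,3,8),(2,4,5)), ((2,4,5),(2,3,8)),
      ((2,3,9),(3,3,4)), ((3,3,4),(2,3,9)),
      ((2,4,7),(3,3,5)), ((3,3,5),(2,4,7)),
      ((2,5,6),(3,4,4)), ((3,4,4),(2,5,6))}"

end

theory Submission
  imports Defs
begin

text \<open>Every factor \<open>cusp_factor n\<close>, hence every \<open>A_mat p q r\<close>, has determinant 1,
so its inverse is its adjugate and conjugacy by a unimodular \<open>P\<close> amounts to the entrywise
identity \<open>P A = B P\<close>. For each self-dual triple and for one direction of each dual pair we
exhibit such a \<open>P\<close>; the other direction follows, since \<open>P A P\<^sup>-\<^sup>1 = B\<^sup>-\<^sup>1\<close> gives
\<open>P\<^sup>-\<^sup>1 B P = A\<^sup>-\<^sup>1\<close>.\<close>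

definition mat2 :: "'a::zero \<Rightarrow> 'a \<Rightarrow> 'a \<Rightarrow> 'a \<Rightarrow> 'a^2^2" where
  "mat2 a b c d = vector [vector [a, b], vector [c, d]]"

lemma mat2_nth [simp]:
  "mat2 a b c d $ 1 $ 1 = a" "mat2 a b c d $ 1 $ 2 = b"
  "mat2 a b c d $ 2 $ 1 = c" "mat2 a b c d $ 2 $ 2 = d"
  by (simp_all add: mat2_def)

lemma mat2_eq_iff: "mat2 a b c d = mat2 a' b' c' d' \<longleftrightarrow> a = a' \<and> b = b' \<and> c = c' \<and> d = d'"
  by (metis mat2_nth)

lemma mat2_mult:
  "mat2 a b c d ** mat2 e f g h = mat2 (a*e + b*g) (a*f + b*h) (c*e + d*g) (c*f + d*h)"
  by (simp add: matrix_matrix_mult_def vec_eq_iff forall_2 sum_2)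

lemma mat_1_eq_mat2: "mat 1 = mat2 1 0 0 1"
  by (simp add: vec_eq_iff forall_2 mat_def)

lemma det_mat2: "det (mat2 a b c d) = a*d - b*c"
  by (simp add: det_2)

lemma mat2_entries: "A = mat2 (A$1$1) (A$1$2) (A$2$1) (A$2$2)"
  by (simp add: vec_eq_iff forall_2)

definition adjugate2 :: "'a::ring_1^2^2 \<Rightarrow> 'a^2^2" where
  "adjugate2 A = mat2 (A$2$2) (- A$1$2) (- A$2$1) (A$1$1)"

lemma matrix_inv_unique:
  fixes A B :: "'a::semiring_1^'n^'n"
  assumes "A ** B = mat 1" "B ** A = mat 1"
  shows "matrix_inv A = B"
proof -
  have inv: "A ** matrix_inv A = mat 1 \<and> matrix_inv A ** A = mat 1"
    unfolding matrix_inv_def by (rule someI[of _ B]) (use assms in blast)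
  have "matrix_inv A = (B ** A) ** matrix_inv A"
    using assms by simp
  also have "\<dots> = B"
    using inv by (simp add: matrix_mul_assoc[symmetric])
  finally show ?thesis .
qed

lemma
  fixes A :: "'a::comm_ring_1^2^2"
  assumes "det A = 1"
  shows mult_adjugate2: "A ** adjugate2 A = mat 1"
    and adjugate2_mult: "adjugate2 A ** A = mat 1"
proof -
  obtain a b c d where A: "A = mat2 a b c d"
    using mat2_entries by blast
  show "A ** adjugate2 A = mat 1" "adjugate2 A ** A = mat 1"
    using assms by (simp_all add: A adjugate2_def mat2_mult mat_1_eq_mat2 mat2_eq_iff det_mat2 algebra_simps)
qed

lemma matrix_inv_eq_adjugate2:
  fixes A :: "'a::comm_ring_1^2^2"
  assumes "det A = 1"
  shows "matrix_inv A = adjugate2 A"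
  using assms by (intro matrix_inv_unique mult_adjugate2 adjugate2_mult)

lemma det_adjugate2: "det (adjugate2 A) = det (A :: 'a::comm_ring_1^2^2)"
  by (simp add: adjugate2_def det_mat2 det_2 algebra_simps)

lemma
  fixes A :: "'a::comm_ring_1^2^2"
  assumes "det A = 1"
  shows mult_matrix_inv_det_1: "A ** matrix_inv A = mat 1"
    and matrix_inv_mult_det_1: "matrix_inv A ** A = mat 1"
    and det_matrix_inv_det_1: "det (matrix_inv A) = 1"
  using assms by (simp_all add: matrix_inv_eq_adjugate2 mult_adjugate2 adjugate2_mult det_adjugate2)

lemma SL2Z_conjugate_iff:
  fixes A B :: "int^2^2"
  shows "SL2Z_conjugate A B \<longleftrightarrow> (\<exists>P. det P = 1 \<and> P ** A = B ** P)"
proof -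
  have "P ** A ** matrix_inv P = B \<longleftrightarrow> P ** A = B ** P" if "det P = 1" for P :: "int^2^2"
  proof
    assume "P ** A ** matrix_inv P = B"
    then have "B ** P = P ** A ** (matrix_inv P ** P)"
      by (simp add: matrix_mul_assoc)
    then show "P ** A = B ** P"
      using that by (simp add: matrix_inv_mult_det_1)
  next
    assume "P ** A = B ** P"
    then have "P ** A ** matrix_inv P = B ** (P ** matrix_inv P)"
      by (simp add: matrix_mul_assoc)
    then show "P ** A ** matrix_inv P = B"
      using that by (simp add: mult_matrix_inv_det_1)
  qed
  then show ?thesis
    unfolding SL2Z_conjugate_def by blast
qed

lemma SL2Z_conjugate_inverse_swap:
  fixes A B :: "int^2^2"
  assumes "det A = 1" "det B = 1" "SL2Z_conjugate A (matrix_inv B)"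
  shows "SL2Z_conjugate B (matrix_inv A)"
proof -
  obtain P where "det P = 1" and PA: "P ** A = matrix_inv B ** P"
    using assms(3) SL2Z_conjugate_iff by blast
  have "B ** P = B ** (P ** A) ** matrix_inv A"
    using assms(1) by (simp add: matrix_mul_assoc[symmetric] mult_matrix_inv_det_1)
  also have "\<dots> = P ** matrix_inv A"
    using assms(2) by (simp add: PA matrix_mul_assoc mult_matrix_inv_det_1)
  finally have BP: "B ** P = P ** matrix_inv A" .
  have "matrix_inv P ** B = matrix_inv P ** (B ** P) ** matrix_inv P"
    using \<open>det P = 1\<close> by (simp add: matrix_mul_assoc[symmetric] mult_matrix_inv_det_1)
  also have "\<dots> = matrix_inv A ** matrix_inv P"
    using \<open>det P = 1\<close> by (simp add: BP matrix_mul_assoc matrix_inv_mult_det_1)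
  finally show ?thesis
    using \<open>det P = 1\<close> SL2Z_conjugate_iff det_matrix_inv_det_1 by blast
qed

lemma SL2Z_conjugate_inverseI:
  fixes A B P :: "int^2^2"
  assumes "det P = 1" "det B = 1" "P ** A = adjugate2 B ** P"
  shows "SL2Z_conjugate A (matrix_inv B)"
  using assms by (auto simp: SL2Z_conjugate_iff matrix_inv_eq_adjugate2)

lemma cusp_factor_eq_mat2: "cusp_factor n = mat2 (n - 1) (-1) 1 0"
  by (simp add: cusp_factor_def mat2_def)

lemma det_A_mat: "det (A_mat p q r) = 1"
  by (simp add: A_mat_def det_mul cusp_factor_eq_mat2 det_mat2)

lemma A_mat_eq_mat2:
  fixes p q r :: nat
  defines "a \<equiv> int p - 1" and "b \<equiv> int q - 1" and "c \<equiv> int r - 1"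
  shows "A_mat p q r = mat2 (c * (b * a - 1) - a) (1 - c * b) (b * a - 1) (- b)"
  by (simp add: A_mat_def cusp_factor_eq_mat2 mat2_mult a_def b_def c_def algebra_simps)

lemma SL2Z_conjugate_A_mat_2_3_7:
  "SL2Z_conjugate (A_mat 2 3 7) (matrix_inv (A_mat 2 3 7))"
  by (rule SL2Z_conjugate_inverseI[where P = "mat2 (-5) 13 (-2) 5"])
    (simp_all add: det_A_mat det_mat2 A_mat_eq_mat2 adjugate2_def mat2_mult)

lemma SL2Z_conjugate_A_mat_2_4_6:
  "SL2Z_conjugate (A_mat 2 4 6) (matrix_inv (A_mat 2 4 6))"
  by (rule SL2Z_conjugate_inverseI[where P = "mat2 (-8) 13 (-5) 8"])
    (simp_all add: det_A_mat det_mat2 A_mat_eq_mat2 adjugate2_def mat2_mult)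

lemma SL2Z_conjugate_A_mat_3_3_6:
  "SL2Z_conjugate (A_mat 3 3 6) (matrix_inv (A_mat 3 3 6))"
  by (rule SL2Z_conjugate_inverseI[where P = "mat2 (-7) 5 (-10) 7"])
    (simp_all add: det_A_mat det_mat2 A_mat_eq_mat2 adjugate2_def mat2_mult)

lemma SL2Z_conjugate_A_mat_2_5_5:
  "SL2Z_conjugate (A_mat 2 5 5) (matrix_inv (A_mat 2 5 5))"
  by (rule SL2Z_conjugate_inverseI[where P = "mat2 (-7) 10 (-5) 7"])
    (simp_all add: det_A_mat det_mat2 A_mat_eq_mat2 adjugate2_def mat2_mult)

lemma SL2Z_conjugate_A_mat_3_4_5:
  "SL2Z_conjugate (A_mat 3 4 5) (matrix_inv (A_mat 3 4 5))"
  by (rule SL2Z_conjugate_inverseI[where P = "mat2 (-8) 5 (-13) 8"])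
    (simp_all add: det_A_mat det_mat2 A_mat_eq_mat2 adjugate2_def mat2_mult)

lemma SL2Z_conjugate_A_mat_4_4_4:
  "SL2Z_conjugate (A_mat 4 4 4) (matrix_inv (A_mat 4 4 4))"
  by (rule SL2Z_conjugate_inverseI[where P = "mat2 (-5) 2 (-13) 5"])
    (simp_all add: det_A_mat det_mat2 A_mat_eq_mat2 adjugate2_def mat2_mult)

lemma SL2Z_conjugate_A_mat_2_3_8_2_4_5:
  "SL2Z_conjugate (A_mat 2 3 8) (matrix_inv (A_mat 2 4 5))"
  by (rule SL2Z_conjugate_inverseI[where P = "mat2 (-5) 12 (-3) 7"])
    (simp_all add: det_A_mat det_mat2 A_mat_eq_mat2 adjugate2_def mat2_mult)

lemma SL2Z_conjugate_A_mat_2_3_9_3_3_4: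
  "SL2Z_conjugate (A_mat 2 3 9) (matrix_inv (A_mat 3 3 4))"
  by (rule SL2Z_conjugate_inverseI[where P = "mat2 (-3) 7 (-4) 9"])
    (simp_all add: det_A_mat det_mat2 A_mat_eq_mat2 adjugate2_def mat2_mult)

lemma SL2Z_conjugate_A_mat_2_4_7_3_3_5:
  "SL2Z_conjugate (A_mat 2 4 7) (matrix_inv (A_mat 3 3 5))"
  by (rule SL2Z_conjugate_inverseI[where P = "mat2 (-5) 8 (-7) 11"])
    (simp_all add: det_A_mat det_mat2 A_mat_eq_mat2 adjugate2_def mat2_mult)

lemma SL2Z_conjugate_A_mat_2_5_6_3_4_4:
  "SL2Z_conjugate (A_mat 2 5 6) (matrix_inv (A_mat 3 4 4))"
  by (rule SL2Z_conjugate_inverseI[where P = "mat2 (-5) 7 (-8) 11"])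
    (simp_all add: det_A_mat det_mat2 A_mat_eq_mat2 adjugate2_def mat2_mult)

theorem proposition4p1:
  fixes p q r p' q' r' :: nat
  assumes "((p, q, r), (p', q', r')) \<in> strange_dual_pairs"
  shows "SL2Z_conjugate (A_mat p q r) (matrix_inv (A_mat p' q' r'))"
proof -
  note dual_swap = SL2Z_conjugate_inverse_swap[OF det_A_mat det_A_mat]
  show ?thesis
    using assms unfolding strange_dual_pairs_def
    using SL2Z_conjugate_A_mat_2_3_7 SL2Z_conjugate_A_mat_2_4_6 SL2Z_conjugate_A_mat_3_3_6
      SL2Z_conjugate_A_mat_2_5_5 SL2Z_conjugate_A_mat_3_4_5 SL2Z_conjugate_A_mat_4_4_4
      SL2Z_conjugate_A_mat_2_3_8_2_4_5 dual_swap[OF SL2Z_conjugate_A_mat_2_3_8_2_4_5]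
      SL2Z_conjugate_A_mat_2_3_9_3_3_4 dual_swap[OF SL2Z_conjugate_A_mat_2_3_9_3_3_4]
      SL2Z_conjugate_A_mat_2_4_7_3_3_5 dual_swap[OF SL2Z_conjugate_A_mat_2_4_7_3_3_5]
      SL2Z_conjugate_A_mat_2_5_6_3_4_4 dual_swap[OF SL2Z_conjugate_A_mat_2_5_6_3_4_4]
    by auto
qed

end
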